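(* Let $\Lambda_1$ be a probability measure on $[0,1]$ with $\Lambda_1(\{0\})=0$ (or $\Lambda_1\equiv0$), and let $$\Psi_1(q)=\int_{[0,1]}(qy-1+(1-y)^q)\frac{\Lambda_1(dy)}{y^2},\qquad q\ge1.$$ If $\int_{[0,1]}\frac{1}{\sqrt y}\Lambda_1(dy)<\infty$, then $\lim_{q\to\infty}\Psi_1(q)/q^{3/2}=0$.
   Context: In the paper, $\Lambda_1$ arises from a probability measure $\Lambda$ on $[0,1]$ with $\Lambda(\{0\})=c\in(0,1]$ via $\Lambda=c\delta_0+(1-c)\Lambda_1$. *)

theory Defs
  imports "HOL-Probability.Probability"
begin

text \<open>Psi_1(q) = integral over [0,1] of (q y - 1 + (1-y)^q) / y^2 with respect to Lambda_1.
  The value of the integrand at y = 0 is irrelevant since Lambda_1({0}) = 0.\<close>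
definition Psi1 :: "real measure \<Rightarrow> real \<Rightarrow> real" where
  "Psi1 L q = (\<integral> y. (q * y - 1 + (1 - y) powr q) / y\<^sup>2 \<partial>L)"

end

theory Submission imports Defs "HOL-Real_Asymp.Real_Asymp" begin

text \<open>With \<open>t = q y\<close>, the integrand \<open>q y - 1 + (1 - y)\<^sup>q\<close> lies between \<open>0\<close> and
  \<open>min t (t\<^sup>2/2) \<le> t^(3/2)\<close>. Divided by \<open>y\<^sup>2 q^(3/2)\<close>, the first bound gives \<open>1/(y \<surd>q) \<rightarrow> 0\<close>
  pointwise and the second the integrable majorant \<open>1/\<surd>y\<close>; dominated convergence concludes.\<close>

definition levy_kernel :: "real \<Rightarrow> real \<Rightarrow> real" where
  "levy_kernel q y = q * y - 1 + (1 - y) powr q"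

lemma one_minus_mult_le_powr_one_minus:
  fixes y q :: real
  assumes "0 \<le> y" "y \<le> 1" "1 \<le> q"
  shows "1 - q * y \<le> (1 - y) powr q"
proof (cases "y = 1")
  case True
  then show ?thesis using assms by simp
next
  case False
  with assms have "y < 1" by simp
  let ?g = "\<lambda>t. (1 - t) powr q - 1 + q * t"
  have "?g 0 \<le> ?g y"
  proof (rule DERIV_nonneg_imp_nondecreasing[OF assms(1)])
    fix x assume x: "0 \<le> x" "x \<le> y"
    have "DERIV ?g x :> q * (1 - (1 - x) powr (q - 1))"
      using x \<open>y < 1\<close> by (auto intro!: derivative_eq_intros simp: algebra_simps)
    moreover have "(1 - x) powr (q - 1) \<le> 1"
      using x \<open>y < 1\<close> assms powr_mono2[of "q - 1" "1 - x" 1] by simp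
    ultimately show "\<exists>d. DERIV ?g x :> d \<and> d \<ge> 0"
      using assms by fastforce
  qed
  then show ?thesis by simp
qed

lemma exp_minus_le_quadratic:
  fixes t :: real
  assumes "0 \<le> t"
  shows "exp (- t) \<le> 1 - t + t\<^sup>2 / 2"
proof -
  let ?h = "\<lambda>t. 1 - t + t\<^sup>2 / 2 - exp (- t)"
  have "?h 0 \<le> ?h t"
  proof (rule DERIV_nonneg_imp_nondecreasing[OF assms])
    fix x :: real
    have "DERIV ?h x :> exp (- x) - (1 - x)"
      by (auto intro!: derivative_eq_intros simp: power2_eq_square)
    moreover have "exp (- x) - (1 - x) \<ge> 0"
      using exp_ge_add_one_self[of "- x"] by simp
    ultimately show "\<exists>d. DERIV ?h x :> d \<and> d \<ge> 0" by blast
  qed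
  then show ?thesis by simp
qed

lemma powr_one_minus_le_exp:
  fixes y q :: real
  assumes "0 \<le> y" "y \<le> 1" "0 \<le> q"
  shows "(1 - y) powr q \<le> exp (- (q * y))"
proof (cases "y = 1")
  case True
  then show ?thesis using assms by simp
next
  case False
  with assms have pos: "0 < 1 - y" by simp
  have "q * ln (1 - y) \<le> q * (- y)"
    using ln_le_minus_one[OF pos] assms by (intro mult_left_mono) auto
  then show ?thesis using pos by (simp add: powr_def)
qed

lemma levy_kernel_nonneg:
  assumes "0 \<le> y" "y \<le> 1" "1 \<le> q"
  shows "0 \<le> levy_kernel q y"
  using one_minus_mult_le_powr_one_minus[OF assms] by (simp add: levy_kernel_def)

lemma levy_kernel_le_linear:
  assumes "0 \<le> y" "y \<le> 1" "0 \<le> q"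
  shows "levy_kernel q y \<le> q * y"
  using assms powr_mono2[of q "1 - y" 1] by (simp add: levy_kernel_def)

lemma levy_kernel_le_quadratic:
  assumes "0 \<le> y" "y \<le> 1" "0 \<le> q"
  shows "levy_kernel q y \<le> (q * y)\<^sup>2 / 2"
  using powr_one_minus_le_exp[OF assms] exp_minus_le_quadratic[of "q * y"] assms
  by (simp add: levy_kernel_def)

lemma levy_kernel_le_three_halves:
  assumes "0 \<le> y" "y \<le> 1" "0 \<le> q"
  shows "levy_kernel q y \<le> q * y * sqrt (q * y)"
proof -
  define t where "t = q * y"
  have "0 \<le> t" using assms by (simp add: t_def)
  show ?thesis
  proof (cases "1 \<le> t")
    case True
    then have "t \<le> t * sqrt t" using mult_left_mono[of 1 "sqrt t" t] by simp
    with levy_kernel_le_linear[OF assms] show ?thesis by (simp add: t_def)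
  next
    case False
    then have "sqrt t * sqrt t \<le> sqrt t * 1" using \<open>0 \<le> t\<close> by (intro mult_left_mono) auto
    then have "t \<le> sqrt t" using \<open>0 \<le> t\<close> by simp
    have "t\<^sup>2 / 2 \<le> t * t" using \<open>0 \<le> t\<close> by (simp add: power2_eq_square)
    also have "\<dots> \<le> t * sqrt t" using \<open>t \<le> sqrt t\<close> \<open>0 \<le> t\<close> by (rule mult_left_mono)
    finally have "t\<^sup>2 / 2 \<le> t * sqrt t" .
    with levy_kernel_le_quadratic[OF assms] show ?thesis by (simp add: t_def)
  qed
qed

lemma powr_three_halves: "0 \<le> q \<Longrightarrow> q powr (3/2) = q * sqrt (q :: real)"
  using powr_add[of q 1 "1/2"] by (cases "q = 0") (simp_all add: powr_half_sqrt)

lemma levy_kernel_scaled_le_inverse_sqrt: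
  assumes "0 < y" "y \<le> 1" "0 < q"
  shows "levy_kernel q y / y\<^sup>2 / q powr (3/2) \<le> 1 / sqrt y"
proof -
  have "levy_kernel q y / y\<^sup>2 / q powr (3/2) \<le> q * y * sqrt (q * y) / y\<^sup>2 / (q * sqrt q)"
    unfolding powr_three_halves[OF less_imp_le[OF \<open>0 < q\<close>]]
    using levy_kernel_le_three_halves[of y q] assms by (intro divide_right_mono) auto
  also have "\<dots> = 1 / sqrt y"
    using assms by (simp add: real_sqrt_mult power2_eq_square field_simps)
  finally show ?thesis .
qed

lemma levy_kernel_scaled_le:
  assumes "0 < y" "y \<le> 1" "0 < q"
  shows "levy_kernel q y / y\<^sup>2 / q powr (3/2) \<le> 1 / (y * sqrt q)"
proof -
  have "levy_kernel q y / y\<^sup>2 / q powr (3/2) \<le> q * y / y\<^sup>2 / (q * sqrt q)"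
    unfolding powr_three_halves[OF less_imp_le[OF \<open>0 < q\<close>]]
    using levy_kernel_le_linear[of y q] assms by (intro divide_right_mono) auto
  also have "\<dots> = 1 / (y * sqrt q)"
    using assms by (simp add: power2_eq_square field_simps)
  finally show ?thesis .
qed

lemma levy_kernel_scaled_tendsto_zero:
  assumes "0 < y" "y \<le> 1"
  shows "((\<lambda>q. levy_kernel q y / y\<^sup>2 / q powr (3/2)) \<longlongrightarrow> 0) at_top"
proof (rule tendsto_sandwich[OF _ _ tendsto_const])
  show "((\<lambda>q. 1 / (y * sqrt q)) \<longlongrightarrow> 0) at_top"
    using assms by real_asymp
  show "\<forall>\<^sub>F q in at_top. 0 \<le> levy_kernel q y / y\<^sup>2 / q powr (3/2)"
    using eventually_ge_at_top[of "1::real"]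
    by eventually_elim (use assms levy_kernel_nonneg in auto)
  show "\<forall>\<^sub>F q in at_top. levy_kernel q y / y\<^sup>2 / q powr (3/2) \<le> 1 / (y * sqrt q)"
    using eventually_gt_at_top[of "0::real"]
    by eventually_elim (use assms levy_kernel_scaled_le in auto)
qed

lemma tendsto_integral_levy_kernel_scaled:
  fixes L :: "real measure"
  assumes sets_L: "sets L = sets borel"
    and unit_interval: "AE y in L. 0 < y \<and> y \<le> 1"
    and integrable: "integrable L (\<lambda>y. 1 / sqrt y)"
  shows "((\<lambda>q. \<integral>y. levy_kernel q y / y\<^sup>2 / q powr (3/2) \<partial>L) \<longlongrightarrow> 0) at_top"
proof -
  have measurable: "(\<lambda>y. levy_kernel q y / y\<^sup>2 / q powr (3/2)) \<in> borel_measurable L" for q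
    unfolding measurable_cong_sets[OF sets_L refl] levy_kernel_def by measurable
  have "((\<lambda>q. \<integral>y. levy_kernel q y / y\<^sup>2 / q powr (3/2) \<partial>L) \<longlongrightarrow> (\<integral>y. 0 \<partial>L)) at_top"
  proof (rule integral_dominated_convergence_at_top[OF _ measurable integrable])
    show "AE y in L. ((\<lambda>q. levy_kernel q y / y\<^sup>2 / q powr (3/2)) \<longlongrightarrow> 0) at_top"
      using unit_interval by eventually_elim (rule levy_kernel_scaled_tendsto_zero; simp)
    show "\<forall>\<^sub>F q in at_top. AE y in L. norm (levy_kernel q y / y\<^sup>2 / q powr (3/2)) \<le> 1 / sqrt y"
      using eventually_ge_at_top[of "1::real"]
    proof eventually_elim
      case (elim q)
      show ?case
        using unit_interval
        by eventually_elim
          (use elim levy_kernel_nonneg levy_kernel_scaled_le_inverse_sqrt in auto)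
    qed
  qed simp
  then show ?thesis by simp
qed

theorem proposition1p5:
  fixes L :: "real measure"
  assumes sets_L: "sets L = sets borel"
    and supp: "emeasure L (UNIV - {0..1}) = 0"
    and prob_or_zero: "emeasure L (space L) = 1 \<or> emeasure L (space L) = 0"
    and no_atom: "emeasure L {0} = 0"
    and fin: "(\<integral>\<^sup>+ y. ennreal (1 / sqrt y) \<partial>L) < \<infinity>"
  shows "((\<lambda>q. Psi1 L q / q powr (3/2)) \<longlongrightarrow> 0) at_top"
proof -
  have unit_interval: "AE y in L. 0 < y \<and> y \<le> 1"
  proof (rule AE_I')
    show "(UNIV - {0..1}) \<union> {0} \<in> null_sets L"
      using supp no_atom sets_L by (intro null_sets.Un) (auto simp: null_sets_def)
  qed auto
  have "integrable L (\<lambda>y. 1 / sqrt y)"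
  proof (rule integrableI_nonneg[OF _ _ fin])
    show "(\<lambda>y. 1 / sqrt y) \<in> borel_measurable L"
      unfolding measurable_cong_sets[OF sets_L refl] by measurable
  qed (use unit_interval in \<open>eventually_elim, simp\<close>)
  then have "((\<lambda>q. \<integral>y. levy_kernel q y / y\<^sup>2 / q powr (3/2) \<partial>L) \<longlongrightarrow> 0) at_top"
    using tendsto_integral_levy_kernel_scaled[OF sets_L unit_interval] by blast
  moreover have "(\<integral>y. levy_kernel q y / y\<^sup>2 / q powr (3/2) \<partial>L) = Psi1 L q / q powr (3/2)" for q
    unfolding Psi1_def levy_kernel_def by (rule integral_divide_zero)
  ultimately show ?thesis by simp
qed

end
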